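(* Let $(V,d,k,q)$ be an instance of the individually fair $k$-center with outliers problem (IF$k$CO) as defined in the context, let $l\ge0$ be an integer, and let $(S,O,\sigma)$ be the solution output by the refined algorithm (Algorithm 3) described in the context, run with parameter $l$. Then $$\alpha(S,O,\sigma)=\max_{i\in V\setminus O}\frac{d_{\sigma(i)i}}{NR_q(i)}\le 2.$$
   Context: IF$k$CO instance: a finite set $V$ with $|V|=n$, a metric $d$ on $V$ (nonnegative, symmetric, $d_{ii}=0$, triangle inequality), and integers $k\ge 1$ and $q\ge 0$. For $i\in V$, $NR_q(i)$ is the distance from $i$ to its $\lceil (n-q)/k\rceil$-th nearest neighbor in $V$, where $i$ counts as its own (first) nearest neighbor. A solution is $(S,O,\sigma)$ with $S,O\subseteq V$ and $\sigma:V\setminus O\to S$; its outlier-related fairness ratio is $\alpha(S,O,\sigma)=\max_{i\in V\setminus O} d_{\sigma(i)i}/NR_q(i)$. For $\beta>0$, procedure $A(\beta)$: set $P:=V$, $S:=\emptyset$; while $P\ne\emptyset$ and $|S|<k$: pick $s\in P$ minimizing $NR_q(i)$ over $i\in P$, set $S:=S\cup\{s\}$, $P:=\{i\in P: d_{is}>\beta\, NR_q(i)\}$; finally set $O:=P$ and let $\sigma(i)$ be a nearest center in $S$ for each $i\in V\setminus O$. Algorithm 2 is $A(2)$. Algorithm 3 (input: instance and integer $l\ge0$): compute $(S,O,\sigma):=$ output of Algorithm 2; set $t:=0$, $\beta_1:=1$, $\beta_2:=2$, $\beta:=\beta_1$. While $t<l$: run $A(\beta)$ obtaining $(S_\beta,O_\beta,\sigma_\beta)$;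 if $|O_\beta|>q$, set $\beta_1:=\beta$; if $|O_\beta|\le q$, set $(S,O,\sigma):=(S_\beta,O_\beta,\sigma_\beta)$ and $\beta_2:=\beta$; in either case then set $\beta:=(\beta_1+\beta_2)/2$ and $t:=t+1$. Output $(S,O,\sigma)$. *)

theory Defs
  imports Complex_Main "HOL-Library.Multiset"
begin

definition metric_on :: "'a set \<Rightarrow> ('a \<Rightarrow> 'a \<Rightarrow> real) \<Rightarrow> bool" where
  "metric_on V d \<longleftrightarrow>
     (\<forall>i\<in>V. \<forall>j\<in>V. d i j \<ge> 0 \<and> d i j = d j i) \<and>
     (\<forall>i\<in>V. d i i = 0) \<and>
     (\<forall>i\<in>V. \<forall>j\<in>V. \<forall>l\<in>V. d i l \<le> d i j + d j l)"

text \<open>Rank m = ceil((n-q)/k); NR_q(i) is the m-th smallest entry (with multiplicity) of the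
  distances from i to all points of V (i itself contributing distance 0).
  Convention: if m \<le> 0 (only possible when q \<ge> n) the first entry is taken.\<close>
definition nr_rank :: "'a set \<Rightarrow> nat \<Rightarrow> nat \<Rightarrow> nat" where
  "nr_rank V k q = nat \<lceil>(real (card V) - real q) / real k\<rceil>"

definition NR :: "'a set \<Rightarrow> ('a \<Rightarrow> 'a \<Rightarrow> real) \<Rightarrow> nat \<Rightarrow> nat \<Rightarrow> 'a \<Rightarrow> real" where
  "NR V d k q i =
     sorted_list_of_multiset (image_mset (d i) (mset_set V)) ! (nr_rank V k q - 1)"

text \<open>Main loop of procedure A(beta), as a relation covering every tie-breaking choice:
  A_loop ... beta P S Pf Sf  means that from state (P,S) the loop can terminate in (Pf,Sf).\<close>
inductive A_loop :: "'a set \<Rightarrow> ('a \<Rightarrow> 'a \<Rightarrow> real) \<Rightarrow> nat \<Rightarrow> nat \<Rightarrow> real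
     \<Rightarrow> 'a set \<Rightarrow> 'a set \<Rightarrow> 'a set \<Rightarrow> 'a set \<Rightarrow> bool"
  for V d k q beta where
  stop: "P = {} \<or> card S \<ge> k \<Longrightarrow> A_loop V d k q beta P S P S"
| step: "\<lbrakk> P \<noteq> {}; card S < k; s \<in> P; \<forall>i\<in>P. NR V d k q s \<le> NR V d k q i;
          A_loop V d k q beta {i \<in> P. d i s > beta * NR V d k q i} (insert s S) Pf Sf \<rbrakk>
        \<Longrightarrow> A_loop V d k q beta P S Pf Sf"

text \<open>Output (S,Ou,sigma) of A(beta): Ou is the final P, sigma assigns each non-outlier a
  nearest center of S (sigma is only meaningful on V - Ou).\<close>
definition A_out :: "'a set \<Rightarrow> ('a \<Rightarrow> 'a \<Rightarrow> real) \<Rightarrow> nat \<Rightarrow> nat \<Rightarrow> real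
     \<Rightarrow> 'a set \<Rightarrow> 'a set \<Rightarrow> ('a \<Rightarrow> 'a) \<Rightarrow> bool" where
  "A_out V d k q beta S Ou \<sigma> \<longleftrightarrow>
     A_loop V d k q beta V {} Ou S \<and>
     (\<forall>i\<in>V - Ou. \<sigma> i \<in> S \<and> (\<forall>s\<in>S. d i (\<sigma> i) \<le> d i s))"

text \<open>Binary-search loop of Algorithm 3 with state (t, beta1, beta2, beta, S, Ou, sigma);
  alg3_loop ... l t b1 b2 b S Ou sigma Sf Of sigmaf: from this state the loop can end with output
  (Sf, Of, sigmaf).\<close>
inductive alg3_loop :: "'a set \<Rightarrow> ('a \<Rightarrow> 'a \<Rightarrow> real) \<Rightarrow> nat \<Rightarrow> nat \<Rightarrow> nat \<Rightarrow> nat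
     \<Rightarrow> real \<Rightarrow> real \<Rightarrow> real \<Rightarrow> 'a set \<Rightarrow> 'a set \<Rightarrow> ('a \<Rightarrow> 'a)
     \<Rightarrow> 'a set \<Rightarrow> 'a set \<Rightarrow> ('a \<Rightarrow> 'a) \<Rightarrow> bool"
  for V d k q l where
  finish: "\<not> t < l \<Longrightarrow> alg3_loop V d k q l t b1 b2 b S Ou \<sigma> S Ou \<sigma>"
| fail_step: "\<lbrakk> t < l; A_out V d k q b S' Ou' \<sigma>'; card Ou' > q;
          alg3_loop V d k q l (Suc t) b b2 ((b + b2) / 2) S Ou \<sigma> Sf Of \<sigma>f \<rbrakk>
        \<Longrightarrow> alg3_loop V d k q l t b1 b2 b S Ou \<sigma> Sf Of \<sigma>f"
| succ_step: "\<lbrakk> t < l; A_out V d k q b S' Ou' \<sigma>'; card Ou' \<le> q;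
          alg3_loop V d k q l (Suc t) b1 b ((b1 + b) / 2) S' Ou' \<sigma>' Sf Of \<sigma>f \<rbrakk>
        \<Longrightarrow> alg3_loop V d k q l t b1 b2 b S Ou \<sigma> Sf Of \<sigma>f"

definition alg3_out :: "'a set \<Rightarrow> ('a \<Rightarrow> 'a \<Rightarrow> real) \<Rightarrow> nat \<Rightarrow> nat \<Rightarrow> nat
     \<Rightarrow> 'a set \<Rightarrow> 'a set \<Rightarrow> ('a \<Rightarrow> 'a) \<Rightarrow> bool" where
  "alg3_out V d k q l S Ou \<sigma> \<longleftrightarrow>
     (\<exists>S0 Ou0 \<sigma>0. A_out V d k q 2 S0 Ou0 \<sigma>0 \<and>
        alg3_loop V d k q l 0 1 2 1 S0 Ou0 \<sigma>0 S Ou \<sigma>)"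

definition fair_ratio :: "'a set \<Rightarrow> ('a \<Rightarrow> 'a \<Rightarrow> real) \<Rightarrow> nat \<Rightarrow> nat
     \<Rightarrow> 'a set \<Rightarrow> ('a \<Rightarrow> 'a) \<Rightarrow> real" where
  "fair_ratio V d k q Ou \<sigma> =
     (if V - Ou = {} then 0 else Max ((\<lambda>i. d (\<sigma> i) i / NR V d k q i) ` (V - Ou)))"

end

theory Submission
  imports Defs
begin

text \<open>Every point that procedure A(\<beta>) removes from P lies within \<beta> NR of the center just
  chosen, so every non-outlier is within \<beta> NR of its nearest center. All values of \<beta> that
  Algorithm 3 ever tries are at most 2, hence every solution it keeps is within 2 NR.\<close>

lemma nr_rank_le_card:
  assumes "k \<ge> 1"
  shows "nr_rank V k q \<le> card V"
proof -
  have "(real (card V) - real q) / real k \<le> real (card V)"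
  proof (cases "real (card V) - real q \<ge> 0")
    case True
    then have "(real (card V) - real q) / real k \<le> real (card V) - real q"
      using assms by (simp add: divide_le_eq mult_le_cancel_left1)
    then show ?thesis by simp
  next
    case False
    then show ?thesis using assms by (simp add: divide_nonpos_pos order_trans[OF _ of_nat_0_le_iff])
  qed
  then show ?thesis
    unfolding nr_rank_def by (simp add: ceiling_le_iff nat_le_iff)
qed

text \<open>Without \<open>k \<ge> 1\<close> the rank could exceed the length of the sorted list, and NR would
  be an unspecified list entry.\<close>

lemma NR_mem_distances:
  assumes "finite V" "k \<ge> 1" "i \<in> V"
  shows "NR V d k q i \<in> d i ` V"
proof -
  let ?L = "sorted_list_of_multiset (image_mset (d i) (mset_set V))"
  have "length ?L = card V"
    by (metis mset_sorted_list_of_multiset size_mset size_image_mset size_mset_set)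
  moreover have "card V \<ge> 1"
    using assms(1,3) by (metis One_nat_def Suc_leI card_gt_0_iff empty_iff)
  ultimately have "nr_rank V k q - 1 < length ?L"
    using nr_rank_le_card[OF assms(2), of V q] by linarith
  then have "?L ! (nr_rank V k q - 1) \<in> set ?L" by (rule nth_mem)
  then show ?thesis
    unfolding NR_def using assms(1) by simp
qed

lemma NR_nonneg:
  assumes "finite V" "metric_on V d" "k \<ge> 1" "i \<in> V"
  shows "NR V d k q i \<ge> 0"
  using NR_mem_distances[OF assms(1,3,4), of d q] assms(2,4) unfolding metric_on_def by auto

lemma A_loop_centers_subset:
  assumes "A_loop V d k q \<beta> P S Pf Sf" "P \<subseteq> V" "S \<subseteq> V"
  shows "Sf \<subseteq> V"
  using assms by induction auto

lemma A_loop_covers: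
  assumes "A_loop V d k q \<beta> P S Pf Sf"
    and "\<forall>i\<in>V - P. \<exists>s\<in>S. d i s \<le> \<beta> * NR V d k q i"
  shows "\<forall>i\<in>V - Pf. \<exists>s\<in>Sf. d i s \<le> \<beta> * NR V d k q i"
  using assms
proof induction
  case (step P S s Pf Sf)
  show ?case
  proof (rule step.IH, intro ballI)
    fix i assume "i \<in> V - {i \<in> P. d i s > \<beta> * NR V d k q i}"
    then have "i \<in> V - P \<or> d i s \<le> \<beta> * NR V d k q i" by auto
    then show "\<exists>s'\<in>insert s S. d i s' \<le> \<beta> * NR V d k q i"
      using step.prems by blast
  qed
qed

lemma A_out_dist_le:
  assumes "metric_on V d" "A_out V d k q \<beta> S Ou \<sigma>" "i \<in> V - Ou"
  shows "d (\<sigma> i) i \<le> \<beta> * NR V d k q i"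
proof -
  have loop: "A_loop V d k q \<beta> V {} Ou S"
    and nearest: "\<sigma> i \<in> S" "\<forall>s\<in>S. d i (\<sigma> i) \<le> d i s"
    using assms(2,3) unfolding A_out_def by auto
  obtain s where "s \<in> S" "d i s \<le> \<beta> * NR V d k q i"
    using A_loop_covers[OF loop] assms(3) by fastforce
  moreover have "\<sigma> i \<in> V"
    using A_loop_centers_subset[OF loop] nearest(1) by blast
  then have "d (\<sigma> i) i = d i (\<sigma> i)"
    using assms(1,3) unfolding metric_on_def by auto
  ultimately show ?thesis
    using nearest(2) by fastforce
qed

lemma alg3_loop_preserves_bound:
  assumes "finite V" "metric_on V d" "k \<ge> 1"
    and "alg3_loop V d k q l t b1 b2 b S Ou \<sigma> Sf Of \<sigma>f"
    and "b1 \<le> c" "b2 \<le> c" "b \<le> c"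
    and "\<forall>i\<in>V - Ou. d (\<sigma> i) i \<le> c * NR V d k q i"
  shows "\<forall>i\<in>V - Of. d (\<sigma>f i) i \<le> c * NR V d k q i"
  using assms(4-)
proof induction
  case (succ_step t b S' Ou' \<sigma>' b1 Sf Of \<sigma>f b2 S Ou \<sigma>)
  have "\<forall>i\<in>V - Ou'. d (\<sigma>' i) i \<le> c * NR V d k q i"
  proof
    fix i assume i: "i \<in> V - Ou'"
    have "d (\<sigma>' i) i \<le> b * NR V d k q i"
      using A_out_dist_le[OF assms(2) succ_step.hyps(2) i] .
    also have "\<dots> \<le> c * NR V d k q i"
      using succ_step.prems(3) NR_nonneg[OF assms(1-3)] i by (simp add: mult_right_mono)
    finally show "d (\<sigma>' i) i \<le> c * NR V d k q i" .
  qed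
  then show ?case
    using succ_step by simp
qed simp_all

lemma fair_ratio_le:
  assumes "finite V" "c \<ge> 0"
    and "\<forall>i\<in>V - Ou. NR V d k q i \<ge> 0 \<and> d (\<sigma> i) i \<le> c * NR V d k q i"
  shows "fair_ratio V d k q Ou \<sigma> \<le> c"
proof -
  have "d (\<sigma> i) i / NR V d k q i \<le> c" if "i \<in> V - Ou" for i
  proof (cases "NR V d k q i = 0")
    case False
    then have "NR V d k q i > 0" and "d (\<sigma> i) i \<le> c * NR V d k q i"
      using assms(3) that by force+
    then show ?thesis by (simp add: divide_le_eq)
  qed (use assms(2) in simp)
  then show ?thesis
    unfolding fair_ratio_def using assms(1,2) by auto
qed

theorem lemma6:
  fixes V :: "'a set" and d :: "'a \<Rightarrow> 'a \<Rightarrow> real" and k q l :: nat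
    and S Ou :: "'a set" and \<sigma> :: "'a \<Rightarrow> 'a"
  assumes "finite V" and "metric_on V d" and "k \<ge> 1"
    and "alg3_out V d k q l S Ou \<sigma>"
  shows "(\<forall>i\<in>V - Ou. d (\<sigma> i) i \<le> 2 * NR V d k q i) \<and> fair_ratio V d k q Ou \<sigma> \<le> 2"
proof -
  obtain S0 Ou0 \<sigma>0 where init: "A_out V d k q 2 S0 Ou0 \<sigma>0"
    and loop: "alg3_loop V d k q l 0 1 2 1 S0 Ou0 \<sigma>0 S Ou \<sigma>"
    using assms(4) unfolding alg3_out_def by blast
  have "\<forall>i\<in>V - Ou0. d (\<sigma>0 i) i \<le> 2 * NR V d k q i"
    using A_out_dist_le[OF assms(2) init] by blast
  then have bound: "\<forall>i\<in>V - Ou. d (\<sigma> i) i \<le> 2 * NR V d k q i"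
    using alg3_loop_preserves_bound[OF assms(1-3) loop] by simp
  moreover have "fair_ratio V d k q Ou \<sigma> \<le> 2"
    using fair_ratio_le[OF assms(1)] bound NR_nonneg[OF assms(1-3)] by simp
  ultimately show ?thesis ..
qed

end
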